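(* Let $n$ be odd and squarefree, with every prime divisor of $n$ at least $7$ and $\Omega(n)\geq 2$, and let $A=S(n)$. Let $S=(x_1,\ldots,x_k)$ be a sequence in $\mathbb{Z}_n$ of length $k=\Omega(n)$. (1) Suppose $S$ is equivalent with respect to $A$ to a sequence $(y_1,\ldots,y_k)$ for which there is a prime divisor $p$ of $n$ such that $y_1$ is the only term not divisible by $p$, and suppose that, with $n'=n/p$, $T=(y_2,\ldots,y_k)$ and $T'$ the image of $T$ under the natural map $\mathbb{Z}_n\to\mathbb{Z}_{n'}$, the sequence $T'$ is a $U(n')$-extremal sequence for the Davenport constant. Then $S$ is an $A$-extremal sequence for the Davenport constant. (2) If $\Omega(n)=2$ and $S$ is equivalent with respect to $A$ to a sequence $(y_1,y_2)$ with $y_1\in S(n)$ and $-y_2\in U(n)\setminus S(n)$, then $S$ is an $A$-extremal sequence for the Davenport constant.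
   Context: $\mathbb{Z}_m$ is the integers mod $m$, $U(m)$ its unit group. For nonempty $A\subseteq\mathbb{Z}_m\setminus\{0\}$, a sequence $(x_1,\ldots,x_k)$ in $\mathbb{Z}_m$ is an $A$-weighted zero-sum sequence if $\sum a_ix_i=0$ for some $a_i\in A$; $D_A(m)$ is the least $k$ such that every length-$k$ sequence in $\mathbb{Z}_m$ has a nonempty $A$-weighted zero-sum subsequence. An $A$-extremal sequence for the Davenport constant is a sequence in $\mathbb{Z}_m$ of length $D_A(m)-1$ having no $A$-weighted zero-sum subsequence. When $A$ is a multiplicative group, $(x_1,\ldots,x_k)$ and $(y_1,\ldots,y_k)$ are equivalent with respect to $A$ if there exist $a_i\in A$, a unit $c$ and a permutation $\sigma$ with $y_{\sigma(i)}=c\,a_ix_i$ for all $i$. $\Omega(n)$ is the number of prime factors of $n$ with multiplicity. For odd $n=\prod p_i^{r_i}$ and $a\in U(n)$, $\left(\frac{a}{n}\right)=\prod\left(\frac{a}{p_i}\right)^{r_i}$ (Legendre symbols of images mod $p_i$), and $S(n)$ is the kernel of $a\mapsto\left(\frac{a}{n}\right)$ on $U(n)$. *)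

theory Defs
  imports "HOL-Number_Theory.Number_Theory" "HOL-Combinatorics.Permutations" "HOL-Computational_Algebra.Squarefree"
begin

text \<open>Z_m is represented by the integers in {0..<m}; a sequence in Z_m is an int list
  with all entries in this set.\<close>

definition Zmod :: "nat \<Rightarrow> int set" where
  "Zmod m = {0..<int m}"

definition Umod :: "nat \<Rightarrow> int set" where
  "Umod m = {a \<in> Zmod m. coprime a (int m)}"

definition Omega :: "nat \<Rightarrow> nat" where
  "Omega n = size (prime_factorization n)"

definition jacobi_sym :: "nat \<Rightarrow> int \<Rightarrow> int" where
  "jacobi_sym n a = (\<Prod>p\<in>prime_factors n. Legendre a (int p) ^ multiplicity p n)"

definition Sgrp :: "nat \<Rightarrow> int set" where
  "Sgrp n = {a \<in> Umod n. jacobi_sym n a = 1}"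

definition has_wzs :: "nat \<Rightarrow> int set \<Rightarrow> int list \<Rightarrow> bool" where
  "has_wzs m A xs \<longleftrightarrow>
     (\<exists>I a. I \<subseteq> {..<length xs} \<and> I \<noteq> {} \<and> (\<forall>i\<in>I. a i \<in> A) \<and>
        [(\<Sum>i\<in>I. a i * xs ! i) = 0] (mod int m))"

definition davenport :: "nat \<Rightarrow> int set \<Rightarrow> nat" where
  "davenport m A = (LEAST k. \<forall>xs. length xs = k \<and> set xs \<subseteq> Zmod m \<longrightarrow> has_wzs m A xs)"

definition extremal :: "nat \<Rightarrow> int set \<Rightarrow> int list \<Rightarrow> bool" where
  "extremal m A xs \<longleftrightarrow> set xs \<subseteq> Zmod m \<and> length xs = davenport m A - 1 \<and> \<not> has_wzs m A xs"

definition equiv_seq :: "nat \<Rightarrow> int set \<Rightarrow> int list \<Rightarrow> int list \<Rightarrow> bool" where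
  "equiv_seq m A xs ys \<longleftrightarrow> length xs = length ys \<and>
     (\<exists>a c \<sigma>. \<sigma> permutes {..<length xs} \<and> (\<forall>i<length xs. a i \<in> A) \<and> c \<in> Umod m \<and>
        (\<forall>i<length xs. [ys ! (\<sigma> i) = c * a i * xs ! i] (mod int m)))"

end

theory Submission
  imports Defs
begin

text \<open>For squarefree \<open>n\<close>, a unit lies in \<open>S(n)\<close> iff its Legendre symbols at the primes
  \<open>p | n\<close> multiply to \<open>1\<close>. By the Chinese remainder theorem an \<open>S(n)\<close>-weighted zero-sum
  modulo \<open>n\<close> therefore amounts to a zero-sum modulo every \<open>p | n\<close>, with weights prime to \<open>p\<close>,
  such that the symbols of the weights of each term multiply to \<open>1\<close>. A term divisible by a
  prime \<open>r\<close> has a free weight at \<open>r\<close>, so only the terms coprime to \<open>n\<close> constrain the symbols.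
  For primes \<open>p \<ge> 7\<close> every nonzero class is a sum of two elements with prescribed symbols,
  and this, together with a subset of the terms meeting every prime in none or at least two
  terms not divisible by it, yields such weights for any \<open>\<Omega>(n) + 1\<close> terms. Hence
  \<open>D\<^sub>S\<^sub>(\<^sub>n\<^sub>)(n) = \<Omega>(n) + 1\<close>, and a sequence of length \<open>\<Omega>(n)\<close> is extremal as soon as it
  has no zero-sum, a property invariant under equivalence. In (1) the first term cannot occur
  in a zero-sum, being the only one prime to \<open>p\<close>, and the other terms would give a
  \<open>U(n/p)\<close>-weighted zero-sum of \<open>T'\<close>; in (2) a zero-sum \<open>a y\<^sub>1 + b y\<^sub>2 = 0\<close> would put
  \<open>-y\<^sub>2\<close> into \<open>S(n)\<close>.\<close>


section \<open>Legendre symbols\<close>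

lemma Legendre_cong:
  assumes "[a = b] (mod p)"
  shows "Legendre a p = Legendre b p"
proof -
  have "QuadRes p a = QuadRes p b" "[a = 0] (mod p) = [b = 0] (mod p)"
    using assms cong_sym cong_trans unfolding QuadRes_def by metis+
  then show ?thesis unfolding Legendre_def by simp
qed

lemma Legendre_eq_0_iff: "Legendre a p = 0 \<longleftrightarrow> p dvd a"
  unfolding Legendre_def by (auto simp: cong_0_iff)

lemma Legendre_unit: "\<not> p dvd a \<Longrightarrow> Legendre a p \<in> {1, -1}"
  unfolding Legendre_def by (auto simp: cong_0_iff)

lemma not_dvd_if_Legendre_unit: "Legendre a p \<in> {1, -1} \<Longrightarrow> \<not> p dvd a"
  by (auto simp: Legendre_eq_0_iff[symmetric])

lemma Legendre_values: "Legendre a p \<in> {0, 1, -1}"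
  unfolding Legendre_def by auto

lemma Legendre_mult:
  fixes p :: nat
  assumes "prime p" "2 < p"
  shows "Legendre (a * b) p = Legendre a p * Legendre b p"
proof -
  let ?h = "(p - 1) div 2"
  have "[Legendre (a * b) p = (a * b) ^ ?h] (mod p)" "[Legendre a p = a ^ ?h] (mod p)"
    "[Legendre b p = b ^ ?h] (mod p)"
    by (rule euler_criterion[OF assms])+
  then have "[Legendre (a * b) p = Legendre a p * Legendre b p] (mod p)"
    unfolding power_mult_distrib by (metis cong_mult cong_sym cong_trans)
  then have dvd: "int p dvd Legendre (a * b) p - Legendre a p * Legendre b p"
    by (simp add: cong_iff_dvd_diff)
  have "Legendre (a * b) p \<in> {0, 1, -1}" "Legendre a p * Legendre b p \<in> {0, 1, -1}"
    using Legendre_values[of "a * b" p] Legendre_values[of a p] Legendre_values[of b p] by auto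
  then have "\<bar>Legendre (a * b) p - Legendre a p * Legendre b p\<bar> < int p"
    using assms(2) by auto
  show ?thesis
  proof (rule ccontr)
    assume "Legendre (a * b) p \<noteq> Legendre a p * Legendre b p"
    then have "int p \<le> \<bar>Legendre (a * b) p - Legendre a p * Legendre b p\<bar>"
      using dvd_imp_le_int[OF _ dvd] by simp
    with \<open>\<bar>Legendre (a * b) p - Legendre a p * Legendre b p\<bar> < int p\<close> show False
      by simp
  qed
qed

lemma Legendre_square:
  fixes p :: nat
  assumes "prime p" "\<not> int p dvd a"
  shows "Legendre (a * a) p = 1"
proof -
  have "\<not> int p dvd a * a"
    using assms by (simp add: prime_dvd_mult_iff)
  moreover have "QuadRes p (a * a)"
    unfolding QuadRes_def by (auto simp: power2_eq_square intro: exI[of _ a])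
  ultimately show ?thesis
    unfolding Legendre_def by (simp add: cong_0_iff)
qed

lemma Legendre_1:
  fixes p :: nat
  assumes "prime p"
  shows "Legendre 1 p = 1"
  using Legendre_square[of p 1] assms prime_gt_1_nat by fastforce

lemma Legendre_inverse:
  fixes p :: nat
  assumes "prime p" "2 < p" "[a * a' = 1] (mod int p)"
  shows "Legendre a' p = Legendre a p" "Legendre a p \<in> {1, -1}"
proof -
  have "Legendre a p * Legendre a' p = 1"
    using Legendre_cong[OF assms(3)] Legendre_1[OF assms(1)] Legendre_mult[OF assms(1,2)] by simp
  then show "Legendre a' p = Legendre a p" "Legendre a p \<in> {1, -1}"
    using zmult_eq_1_iff by auto
qed

lemma exists_inverse_mod_prime:
  fixes p :: nat
  assumes "prime p" "\<not> int p dvd a"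
  shows "\<exists>a'. [a * a' = 1] (mod int p)"
proof -
  have "coprime a (int p)"
    using assms prime_imp_coprime[of "int p" a] by (simp add: coprime_commute)
  then show ?thesis
    by (rule cong_solve_coprime_int)
qed

lemma exists_nonresidue:
  fixes p :: nat
  assumes "prime p" "2 < p"
  shows "\<exists>g. Legendre g p = -1"
proof (rule ccontr)
  assume no_nonresidue: "\<nexists>g. Legendre g p = -1"
  let ?h = "(p - 1) div 2"
  obtain g where "residue_primroot p g"
    using prime_primitive_root_exists assms(1) prime_gt_1_nat by blast
  then have ord: "ord p g = p - 1" and "coprime p g"
    using assms by (auto simp: residue_primroot_def totient_prime)
  then have "\<not> int p dvd int g"
    using assms(1) coprime_absorb_left[of p g] by auto
  then have "Legendre (int g) p = 1"
    using Legendre_unit no_nonresidue by blast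
  moreover have "[Legendre (int g) p = int g ^ ?h] (mod p)"
    by (rule euler_criterion[OF assms])
  ultimately have "[int (g ^ ?h) = int 1] (mod int p)"
    by (simp add: cong_sym)
  then have "ord p g dvd ?h"
    by (simp only: cong_int_iff ord_divides)
  moreover have "0 < ?h" "?h < p - 1"
    using assms by auto
  ultimately show False
    using ord dvd_imp_le[of "p - 1" ?h] by simp
qed

lemma exists_Legendre_eq:
  fixes p :: nat
  assumes "prime p" "2 < p" "e \<in> {1, -1}"
  shows "\<exists>c. Legendre c p = e"
  using assms Legendre_1 exists_nonresidue by blast

lemma prod_Legendre_unit:
  assumes "\<forall>p\<in>P. \<not> int p dvd w p"
  shows "(\<Prod>p\<in>P. Legendre (w p) (int p)) \<in> {1, -1}"
proof -
  have "\<bar>Legendre (w p) (int p)\<bar> = 1" if "p \<in> P" for p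
    using Legendre_unit[of "int p" "w p"] assms that by auto
  then have "\<bar>\<Prod>p\<in>P. Legendre (w p) (int p)\<bar> = 1"
    unfolding abs_prod by (intro prod.neutral) blast
  then show ?thesis
    by (auto simp: abs_if split: if_splits)
qed

lemma prod_Legendre_mult_at:
  assumes "\<forall>p\<in>P. prime p \<and> 2 < p" "finite P" "r \<in> P"
  shows "(\<Prod>p\<in>P. Legendre (if p = r then g p * w p else w p) (int p)) =
    Legendre (g r) (int r) * (\<Prod>p\<in>P. Legendre (w p) (int p))"
proof -
  have "(\<Prod>p\<in>P. Legendre (if p = r then g p * w p else w p) (int p)) =
      (\<Prod>p\<in>P. (if p = r then Legendre (g p) (int p) else 1) * Legendre (w p) (int p))"
    using assms(1) by (intro prod.cong) (auto simp: Legendre_mult)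
  also have "\<dots> = (\<Prod>p\<in>P. if p = r then Legendre (g p) (int p) else 1) *
      (\<Prod>p\<in>P. Legendre (w p) (int p))"
    by (rule prod.distrib)
  finally show ?thesis
    using assms(2,3) by (simp add: prod.delta)
qed


section \<open>Sums of two elements with prescribed symbols\<close>

definition one_as_sum :: "nat \<Rightarrow> int \<Rightarrow> int \<Rightarrow> bool" where
  "one_as_sum p e1 e2 \<longleftrightarrow>
     (\<exists>x y. Legendre x (int p) = e1 \<and> Legendre y (int p) = e2 \<and> [x + y = 1] (mod int p))"

lemma one_as_sum_commute: "one_as_sum p e1 e2 \<Longrightarrow> one_as_sum p e2 e1"
  unfolding one_as_sum_def by (metis add.commute)

text \<open>\<open>(4/5)\<^sup>2 + (3/5)\<^sup>2 = 1\<close>, and \<open>p\<close> divides none of \<open>3, 4, 5\<close>.\<close>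

lemma one_as_sum_residues:
  fixes p :: nat
  assumes "prime p" "7 \<le> p"
  shows "one_as_sum p 1 1"
proof -
  have small: "\<not> int p dvd k" if "0 < k" "k < 7" for k :: int
    using assms that zdvd_imp_le[of "int p" k] by linarith
  obtain b where b: "[5 * b = 1] (mod int p)"
    using exists_inverse_mod_prime[OF assms(1) small[of 5]] by auto
  have "\<not> int p dvd b"
  proof
    assume "int p dvd b"
    then have "int p dvd 1"
      using cong_dvd_iff[OF b] by simp
    then show False
      using assms(1) by simp
  qed
  moreover have "prime (int p)"
    using assms(1) by simp
  ultimately have "\<not> int p dvd 4 * b" "\<not> int p dvd 3 * b"
    using small[of 4] small[of 3] by (simp_all add: prime_dvd_mult_iff)
  then have "Legendre ((4 * b) * (4 * b)) p = 1" "Legendre ((3 * b) * (3 * b)) p = 1"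
    using Legendre_square[OF assms(1)] by blast+
  moreover have "[(4 * b) * (4 * b) + (3 * b) * (3 * b) = 1] (mod int p)"
  proof -
    have "[(5 * b) * (5 * b) = 1 * 1] (mod int p)"
      using b cong_mult by blast
    then show ?thesis
      by (simp add: algebra_simps)
  qed
  ultimately show ?thesis
    unfolding one_as_sum_def by blast
qed

text \<open>Take for \<open>g\<close> the least positive nonresidue.\<close>

lemma exists_residue_before_nonresidue:
  fixes p :: nat
  assumes "prime p" "2 < p"
  shows "\<exists>g. Legendre (g - 1) p = 1 \<and> Legendre g p = -1"
proof -
  define g where "g = (LEAST g :: nat. Legendre (int g) p = -1)"
  obtain h where "Legendre h p = -1"
    using exists_nonresidue assms by blast
  moreover have "[int (nat (h mod int p)) = h] (mod int p)"
    using assms by (simp add: cong_def)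
  ultimately have "Legendre (int (nat (h mod int p))) p = -1"
    using Legendre_cong by simp
  then have g: "Legendre (int g) p = -1" and "g \<le> nat (h mod int p)"
    unfolding g_def by (rule LeastI, rule Least_le)
  moreover have "nat (h mod int p) < p"
    using assms by (simp add: nat_less_iff)
  ultimately have "g < p"
    by linarith
  have "g \<noteq> 0"
    using g by (intro notI) (simp add: Legendre_def)
  have "g \<noteq> 1"
    using g Legendre_1[OF assms(1)] by (intro notI) simp
  have "\<not> int p dvd int (g - 1)"
  proof
    assume "int p dvd int (g - 1)"
    then have "p dvd g - 1"
      by (simp only: int_dvd_int_iff)
    then have "p \<le> g - 1"
      using \<open>g \<noteq> 0\<close> \<open>g \<noteq> 1\<close> by (intro dvd_imp_le) auto
    then show False
      using \<open>g < p\<close> by linarith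
  qed
  moreover have "Legendre (int (g - 1)) p \<noteq> -1"
    using \<open>g \<noteq> 0\<close> unfolding g_def by (intro not_less_Least) simp
  moreover have "int (g - 1) = int g - 1"
    using \<open>g \<noteq> 0\<close> by simp
  ultimately have "Legendre (int g - 1) p = 1"
    using Legendre_unit[of "int p" "int g - 1"] by auto
  with g show ?thesis
    by blast
qed

text \<open>With \<open>g\<close> as above, \<open>(g - 1)/g + 1/g = 1\<close>.\<close>

lemma one_as_sum_nonresidues:
  fixes p :: nat
  assumes "prime p" "2 < p"
  shows "one_as_sum p (-1) (-1)"
proof -
  obtain g where g: "Legendre (g - 1) p = 1" "Legendre g p = -1"
    using exists_residue_before_nonresidue[OF assms] by blast
  then have "\<not> int p dvd g"
    using Legendre_eq_0_iff[of g "int p"] by simp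
  then obtain g' where g': "[g * g' = 1] (mod int p)"
    using exists_inverse_mod_prime[OF assms(1)] by blast
  then have "Legendre g' p = -1"
    using Legendre_inverse[OF assms] g(2) by simp
  moreover from this have "Legendre ((g - 1) * g') p = -1"
    using g(1) Legendre_mult[OF assms] by simp
  moreover have "[(g - 1) * g' + g' = 1] (mod int p)"
    using g' by (simp add: algebra_simps)
  ultimately show ?thesis
    unfolding one_as_sum_def by blast
qed

text \<open>Dividing \<open>x + y = 1\<close> by \<open>x\<close> gives \<open>1/x + (-y/x) = 1\<close>.\<close>

lemma one_as_sum_twist:
  fixes p :: nat
  assumes "prime p" "2 < p" "one_as_sum p e1 e2" "e1 \<noteq> 0"
  shows "one_as_sum p e1 (Legendre (-1) p * e1 * e2)"
proof -
  obtain x y where xy: "Legendre x p = e1" "Legendre y p = e2" "[x + y = 1] (mod int p)"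
    using assms(3) unfolding one_as_sum_def by blast
  then have "\<not> int p dvd x"
    using assms(4) Legendre_eq_0_iff[of x "int p"] by simp
  then obtain x' where x': "[x * x' = 1] (mod int p)"
    using exists_inverse_mod_prime[OF assms(1)] by blast
  then have "Legendre x' p = e1"
    using Legendre_inverse[OF assms(1,2)] xy(1) by simp
  moreover have "Legendre (- (y * x')) p = Legendre (-1) p * e1 * e2"
    using Legendre_mult[OF assms(1,2), of "-1" "y * x'"] Legendre_mult[OF assms(1,2), of y x']
      xy(2) \<open>Legendre x' p = e1\<close> by simp
  moreover have "[x' + - (y * x') = 1] (mod int p)"
  proof -
    have "[(1 - y) * x' = x * x'] (mod int p)"
      using cong_diff[OF xy(3) cong_refl[of y]] by (intro cong_mult cong_refl) (simp add: cong_sym)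
    then show ?thesis
      using x' cong_trans by (simp add: algebra_simps)
  qed
  ultimately show ?thesis
    unfolding one_as_sum_def by blast
qed

lemma one_as_sum_all:
  fixes p :: nat
  assumes "prime p" "7 \<le> p" "e1 \<in> {1, -1}" "e2 \<in> {1, -1}"
  shows "one_as_sum p e1 e2"
proof -
  have p: "prime p" "2 < p"
    using assms by auto
  have "one_as_sum p 1 1" "one_as_sum p (-1) (-1)"
    using one_as_sum_residues[OF assms(1,2)] one_as_sum_nonresidues[OF p] .
  moreover have "Legendre (-1) p \<in> {1, -1}"
    using p by (intro Legendre_unit) simp
  ultimately have "one_as_sum p 1 (-1)" "one_as_sum p (-1) 1"
    using one_as_sum_twist[OF p] one_as_sum_commute by fastforce+
  with \<open>one_as_sum p 1 1\<close> \<open>one_as_sum p (-1) (-1)\<close> show ?thesis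
    using assms(3,4) by auto
qed

lemma Legendre_minus_mult_inverse:
  fixes p :: nat
  assumes "prime p" "2 < p" "[u * u' = 1] (mod int p)" "\<not> int p dvd w"
    and "Legendre x p = Legendre (- (u * w)) p"
  shows "Legendre (- (x * w * u')) p = 1"
proof -
  note L = Legendre_mult[OF assms(1,2)]
  have signs: "Legendre (- 1) p \<in> {1, -1}" "Legendre w p \<in> {1, -1}"
    using assms(1,2,4) by (auto intro!: Legendre_unit simp del: insert_iff)
  have "Legendre (- (x * w * u')) p = Legendre (- 1) p * (Legendre x p * Legendre w p * Legendre u' p)"
    using L[of "-1" "x * w * u'"] L[of "x * w" u'] L[of x w] by simp
  also have "\<dots> = (Legendre (- 1) p * Legendre (- 1) p) * (Legendre u p * Legendre u p) *
      (Legendre w p * Legendre w p)"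
    using assms(5) L[of "-1" "u * w"] L[of u w] Legendre_inverse(1)[OF assms(1-3)] by (simp add: mult_ac)
  also have "\<dots> = 1"
    using signs Legendre_inverse(2)[OF assms(1-3)] by auto
  finally show ?thesis .
qed

text \<open>Scaling \<open>x + y = 1\<close> by \<open>-w\<close>: take \<open>a = -x w/u\<close> and \<open>b = -y w/v\<close>, where the symbols
  of \<open>x\<close> and \<open>y\<close> are chosen to make \<open>a\<close> and \<open>b\<close> residues.\<close>

lemma three_term_zero_sum_residues:
  fixes p :: nat
  assumes "prime p" "7 \<le> p" "\<not> int p dvd u" "\<not> int p dvd v" "\<not> int p dvd w"
  shows "\<exists>a b. Legendre a p = 1 \<and> Legendre b p = 1 \<and> [a * u + b * v + w = 0] (mod int p)"
proof -
  have p: "prime p" "2 < p" and "prime (int p)"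
    using assms by auto
  then have "\<not> int p dvd - (u * w)" "\<not> int p dvd - (v * w)"
    using assms(3-5) by (simp_all add: prime_dvd_mult_iff)
  then obtain x y where xy: "Legendre x p = Legendre (- (u * w)) p" "Legendre y p = Legendre (- (v * w)) p"
    "[x + y = 1] (mod int p)"
    using one_as_sum_all[OF assms(1,2) Legendre_unit Legendre_unit] unfolding one_as_sum_def by blast
  obtain u' v' where u': "[u * u' = 1] (mod int p)" and v': "[v * v' = 1] (mod int p)"
    using exists_inverse_mod_prime[OF assms(1)] assms(3,4) by metis
  have "Legendre (- (x * w * u')) p = 1" "Legendre (- (y * w * v')) p = 1"
    using Legendre_minus_mult_inverse[OF p u' assms(5) xy(1)]
      Legendre_minus_mult_inverse[OF p v' assms(5) xy(2)] by simp_all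
  moreover have "[- (x * w * u') * u + - (y * w * v') * v + w = 0] (mod int p)"
  proof -
    have "- (x * w * u') * u + - (y * w * v') * v + w =
        - (x * w) * (u * u' - 1) - (y * w) * (v * v' - 1) - w * (x + y - 1)"
      by (simp add: algebra_simps)
    moreover have "int p dvd u * u' - 1" "int p dvd v * v' - 1" "int p dvd x + y - 1"
      using u' v' xy(3) by (simp_all add: cong_iff_dvd_diff)
    ultimately show ?thesis
      unfolding cong_0_iff by (simp add: dvd_diff)
  qed
  ultimately show ?thesis
    by blast
qed


section \<open>Zero-sums modulo a prime\<close>

definition local_zero_sum :: "nat \<Rightarrow> nat set \<Rightarrow> (nat \<Rightarrow> int) \<Rightarrow> int list \<Rightarrow> bool" where
  "local_zero_sum p I w xs \<longleftrightarrow>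
     (\<forall>i\<in>I. \<not> int p dvd w i) \<and> [(\<Sum>i\<in>I. w i * xs ! i) = 0] (mod int p)"

lemma local_zero_sum_change_at_multiples:
  assumes "local_zero_sum p I w xs"
    and "\<forall>i\<in>I. w' i \<noteq> w i \<longrightarrow> int p dvd xs ! i \<and> \<not> int p dvd w' i"
  shows "local_zero_sum p I w' xs"
proof -
  have "[(\<Sum>i\<in>I. w' i * xs ! i) = (\<Sum>i\<in>I. w i * xs ! i)] (mod int p)"
  proof (rule cong_sum)
    fix i
    assume "i \<in> I"
    show "[w' i * xs ! i = w i * xs ! i] (mod int p)"
    proof (cases "w' i = w i")
      case False
      then have "int p dvd xs ! i"
        using assms(2) \<open>i \<in> I\<close> by blast
      then have "[w' i * xs ! i = 0] (mod int p)" and zero: "[w i * xs ! i = 0] (mod int p)"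
        by (simp_all add: cong_0_iff)
      then show ?thesis
        using cong_trans[OF _ cong_sym[OF zero]] by blast
    qed simp
  qed
  moreover have "\<forall>i\<in>I. \<not> int p dvd w' i"
    using assms unfolding local_zero_sum_def by (metis (full_types))
  ultimately show ?thesis
    using assms(1) cong_trans unfolding local_zero_sum_def by blast
qed

text \<open>Of \<open>s + c x\<close> and \<open>s + 4 c x\<close>, which differ by \<open>3 c x\<close>, at most one vanishes.\<close>

lemma exists_same_symbol_nonzero_sum:
  fixes p :: nat
  assumes "prime p" "3 < p" "\<not> int p dvd c" "\<not> int p dvd x"
  shows "\<exists>c'. Legendre c' p = Legendre c p \<and> \<not> int p dvd s + c' * x"
proof (cases "int p dvd s + c * x")
  case True
  have p: "prime p" "2 < p" and pi: "prime (int p)"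
    using assms(1,2) by auto
  have "\<not> int p dvd 2" "\<not> int p dvd 3"
    using assms(2) zdvd_imp_le[of "int p" 2] zdvd_imp_le[of "int p" 3] by linarith+
  then have "Legendre (4 * c) p = Legendre c p"
    using Legendre_square[OF assms(1), of 2] Legendre_mult[OF p, of 4 c] by simp
  moreover have "\<not> int p dvd s + 4 * c * x"
  proof
    assume "int p dvd s + 4 * c * x"
    then have "int p dvd (s + 4 * c * x) - (s + c * x)"
      using True by (rule dvd_diff)
    then have "int p dvd 3 * (c * x)"
      by (simp add: algebra_simps)
    then show False
      using pi assms(3,4) \<open>\<not> int p dvd 3\<close> by (simp add: prime_dvd_mult_iff)
  qed
  ultimately show ?thesis
    by (intro exI[of _ "4 * c"]) simp
qed blast

text \<open>The weight at \<open>j\<close> is chosen last, to cancel the rest of the sum, which the weight at \<open>d\<close>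
  keeps nonzero.\<close>

lemma local_zero_sum_prescribed_symbols:
  fixes p :: nat
  assumes "prime p" "3 < p" "finite I" "j \<in> I" "d \<in> I" "d \<noteq> j"
    and "\<not> int p dvd xs ! j" "\<not> int p dvd xs ! d" "\<forall>i\<in>I - {j}. e i \<in> {1, -1}"
  shows "\<exists>w. local_zero_sum p I w xs \<and> (\<forall>i\<in>I - {j}. Legendre (w i) p = e i)"
proof -
  have p: "prime p" "2 < p" and pi: "prime (int p)"
    using assms(1,2) by auto
  have "\<forall>i\<in>I - {j}. \<exists>c. Legendre c p = e i"
    using assms(9) by (intro ballI exists_Legendre_eq[OF p]) blast
  then obtain c where c: "\<forall>i\<in>I - {j}. Legendre (c i) p = e i"
    using bchoice[of "I - {j}" "\<lambda>i c. Legendre c p = e i"] by blast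
  have c_unit: "\<not> int p dvd c i" if "i \<in> I - {j}" for i
    using that c assms(9) by (intro not_dvd_if_Legendre_unit) auto
  define s where "s = (\<Sum>i\<in>I - {j, d}. c i * xs ! i)"
  obtain c_d where c_d: "Legendre c_d p = e d" "\<not> int p dvd s + c_d * xs ! d"
    using exists_same_symbol_nonzero_sum[OF assms(1,2) c_unit[of d] assms(8), of s] c assms(5,6)
    by auto
  define t where "t = s + c_d * xs ! d"
  obtain x' where x': "[xs ! j * x' = 1] (mod int p)"
    using exists_inverse_mod_prime[OF assms(1,7)] by blast
  define w where "w i = (if i = j then - (t * x') else if i = d then c_d else c i)" for i
  have symbols: "\<forall>i\<in>I - {j}. Legendre (w i) p = e i"
    using c c_d(1) unfolding w_def by auto
  have "\<not> int p dvd w i" if "i \<in> I - {j}" for i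
    by (intro not_dvd_if_Legendre_unit) (use symbols assms(9) that in auto)
  moreover have "\<not> int p dvd w j"
    using c_d(2) x' pi cong_dvd_iff[OF x'] unfolding w_def t_def by (auto simp: prime_dvd_mult_iff)
  ultimately have units: "\<forall>i\<in>I. \<not> int p dvd w i"
    by blast
  have "(\<Sum>i\<in>I. w i * xs ! i) = w j * xs ! j + (w d * xs ! d + (\<Sum>i\<in>I - {j, d}. w i * xs ! i))"
    using assms(3-6) by (simp add: sum.remove insert_Diff_if Diff_insert2 [symmetric])
  also have "\<dots> = - t * (xs ! j * x' - 1)"
    unfolding w_def t_def s_def using assms(6) by (simp add: algebra_simps)
  finally have "[(\<Sum>i\<in>I. w i * xs ! i) = 0] (mod int p)"
    using x' by (simp add: cong_0_iff cong_iff_dvd_diff)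
  then show ?thesis
    using units symbols unfolding local_zero_sum_def by auto
qed

lemma local_zero_sum_two_units:
  fixes p :: nat
  assumes "prime p" "3 < p" "distinct [i1, i2, l]" "\<not> int p dvd xs ! i1" "\<not> int p dvd xs ! i2"
    and "e \<in> {1, -1}"
  shows "\<exists>w. local_zero_sum p {i1, i2, l} w xs \<and> Legendre (w i1) p = 1 \<and>
      (\<not> int p dvd xs ! l \<longrightarrow> Legendre (w i2) p = e)"
proof (cases "int p dvd xs ! l")
  case True
  have "\<exists>w. local_zero_sum p {i1, i2, l} w xs \<and> (\<forall>i\<in>{i1, i2, l} - {i2}. Legendre (w i) p = 1)"
    by (rule local_zero_sum_prescribed_symbols[OF assms(1,2), where d = i1]) (use assms(3-5) in auto)
  then show ?thesis
    using True assms(3) by auto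
next
  case False
  have "\<exists>w. local_zero_sum p {i1, i2, l} w xs \<and>
      (\<forall>i\<in>{i1, i2, l} - {l}. Legendre (w i) p = (if i = i2 then e else 1))"
    by (rule local_zero_sum_prescribed_symbols[OF assms(1,2), where d = i1])
      (use assms(3-6) False in auto)
  then show ?thesis
    using assms(3) by auto
qed

text \<open>If some \<open>p\<close> is related to exactly one \<open>i\<close>, discard both and recurse.\<close>

lemma exists_subset_card_sections_neq_1:
  fixes P :: "'a set" and E :: "'b set" and R :: "'b \<Rightarrow> 'a \<Rightarrow> bool"
  assumes "finite P" "finite E" "card P < card E"
  shows "\<exists>I\<subseteq>E. I \<noteq> {} \<and> (\<forall>p\<in>P. card {i\<in>I. R i p} \<noteq> 1)"
  using assms
proof (induction "card P" arbitrary: P E rule: less_induct)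
  case less
  show ?case
  proof (cases "\<exists>p\<in>P. card {i\<in>E. R i p} = 1")
    case False
    moreover have "E \<noteq> {}"
      using less.prems by auto
    ultimately show ?thesis
      by blast
  next
    case True
    then obtain p j where p: "p \<in> P" and j: "{i\<in>E. R i p} = {j}"
      by (auto simp: card_1_singleton_iff)
    then have "j \<in> E"
      by blast
    moreover have "0 < card P"
      using p less.prems(1) by (auto simp: card_gt_0_iff)
    ultimately have smaller: "card (P - {p}) < card P" "card (P - {p}) < card (E - {j})"
      using p less.prems by simp_all
    have "\<exists>I\<subseteq>E - {j}. I \<noteq> {} \<and> (\<forall>q\<in>P - {p}. card {i\<in>I. R i q} \<noteq> 1)"
      by (rule less.hyps[OF smaller(1)]) (use less.prems smaller(2) in auto)
    then obtain I where I: "I \<subseteq> E - {j}" "I \<noteq> {}" "\<forall>q\<in>P - {p}. card {i\<in>I. R i q} \<noteq> 1"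
      by blast
    have "card {i\<in>I. R i q} \<noteq> 1" if "q \<in> P" for q
    proof (cases "q = p")
      case True
      then have empty: "{i\<in>I. R i q} = {}"
        using I(1) j by blast
      show ?thesis
        unfolding empty by simp
    qed (use I(3) that in blast)
    then show ?thesis
      using I(1,2) by blast
  qed
qed

lemma local_zero_sum_residues_on_subsingleton:
  fixes p :: nat
  assumes "prime p" "3 < p" "finite I" "card {i\<in>I. \<not> int p dvd xs ! i} \<noteq> 1"
    and "\<forall>i\<in>I. \<forall>j\<in>I. U i \<longrightarrow> U j \<longrightarrow> i = j"
  shows "\<exists>w. local_zero_sum p I w xs \<and> (\<forall>i\<in>I. U i \<longrightarrow> Legendre (w i) p = 1)"
proof (cases "{i\<in>I. \<not> int p dvd xs ! i} = {}")
  case True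
  then have "local_zero_sum p I (\<lambda>_. 1) xs"
    using assms(1) unfolding local_zero_sum_def cong_0_iff by (auto intro!: dvd_sum)
  then show ?thesis
    using Legendre_1[OF assms(1)] by auto
next
  case False
  then have "\<not> card {i\<in>I. \<not> int p dvd xs ! i} \<le> 1"
    using assms(3,4) by (simp add: le_Suc_eq)
  then obtain a b where "a \<in> I" "b \<in> I" "a \<noteq> b" "\<not> int p dvd xs ! a" "\<not> int p dvd xs ! b"
    using card_le_Suc0_iff_eq[of "{i\<in>I. \<not> int p dvd xs ! i}"] assms(3) by auto
  then obtain j d where jd: "j \<in> I" "d \<in> I" "j \<noteq> d" "\<not> int p dvd xs ! j" "\<not> int p dvd xs ! d"
    "\<not> U j"
    using assms(5) by blast
  have "\<exists>w. local_zero_sum p I w xs \<and> (\<forall>i\<in>I - {j}. Legendre (w i) p = 1)"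
    by (rule local_zero_sum_prescribed_symbols[OF assms(1,2,3), where d = d]) (use jd in auto)
  then show ?thesis
    using jd(6) by blast
qed


section \<open>Squarefree moduli and the group \<open>S(n)\<close>\<close>

lemma coprime_int_iff_prime_factors:
  fixes n :: nat
  assumes "n \<noteq> 0"
  shows "coprime a (int n) \<longleftrightarrow> (\<forall>p\<in>prime_factors n. \<not> int p dvd a)"
proof
  assume cop: "coprime a (int n)"
  show "\<forall>p\<in>prime_factors n. \<not> int p dvd a"
  proof (intro ballI notI)
    fix p
    assume "p \<in> prime_factors n" "int p dvd a"
    moreover from this have "int p dvd int n" "prime p"
      by (auto simp: in_prime_factors_iff)
    ultimately show False
      using coprime_common_divisor_int[OF cop, of "int p"] prime_gt_1_nat[of p] by simp
  qed
next
  assume ndvd: "\<forall>p\<in>prime_factors n. \<not> int p dvd a"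
  have "coprime a (\<Prod>p\<in>prime_factors n. int p ^ multiplicity p n)"
  proof (rule prod_coprime_right)
    fix p
    assume "p \<in> prime_factors n"
    then have "coprime (int p) a"
      using ndvd by (intro prime_imp_coprime) auto
    then show "coprime a (int p ^ multiplicity p n)"
      by (simp add: coprime_commute)
  qed
  moreover have "int (\<Prod>p\<in>prime_factors n. p ^ multiplicity p n) = int n"
    using prod_prime_factors[OF assms] by simp
  then have "(\<Prod>p\<in>prime_factors n. int p ^ multiplicity p n) = int n"
    by simp
  ultimately show "coprime a (int n)"
    by simp
qed

lemma multiplicity_squarefree:
  fixes n :: nat
  assumes "squarefree n" "p \<in> prime_factors n"
  shows "multiplicity p n = 1"
  using assms squarefree_factorial_semiring'[of n] by (cases "n = 0") auto

lemma Omega_squarefree: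
  assumes "squarefree n"
  shows "Omega n = card (prime_factors n)"
proof -
  have factorization: "prime_factorization n = mset_set (prime_factors n)"
  proof (rule multiset_eqI)
    fix p
    show "count (prime_factorization n) p = count (mset_set (prime_factors n)) p"
    proof (cases "p \<in> prime_factors n")
      case True
      then have "prime p"
        by auto
      then show ?thesis
        using True multiplicity_squarefree[OF assms True] count_prime_factorization_prime[of p n]
        by simp
    next
      case False
      then show ?thesis
        by (simp add: not_in_iff)
    qed
  qed
  have "Omega n = size (mset_set (prime_factors n))"
    unfolding Omega_def by (rule arg_cong[OF factorization])
  then show ?thesis
    by simp
qed

lemma int_dvd_if_prime_factors_dvd:
  fixes n :: nat
  assumes "squarefree n" "\<forall>p\<in>prime_factors n. int p dvd s"
  shows "int n dvd s"
proof (cases "s = 0")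
  case False
  have "n dvd nat \<bar>s\<bar>"
  proof (rule multiplicity_le_imp_dvd)
    show "n \<noteq> 0"
      using assms(1) by (cases "n = 0") auto
    fix p :: nat
    assume "prime p"
    show "multiplicity p n \<le> multiplicity p (nat \<bar>s\<bar>)"
    proof (cases "p \<in> prime_factors n")
      case True
      then have "p dvd nat \<bar>s\<bar>"
        using assms(2) by simp
      then have "0 < multiplicity p (nat \<bar>s\<bar>)"
        using \<open>prime p\<close> False by (simp add: prime_multiplicity_gt_zero_iff)
      then show ?thesis
        using multiplicity_squarefree[OF assms(1) True] by simp
    next
      case False
      then show ?thesis
        using \<open>prime p\<close> \<open>n \<noteq> 0\<close> by (simp add: in_prime_factors_iff not_dvd_imp_multiplicity_0)
    qed
  qed
  then show ?thesis
    by simp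
qed simp

lemma chinese_remainder_prime_factors:
  fixes n :: nat and f :: "nat \<Rightarrow> int"
  assumes "n \<noteq> 0"
  shows "\<exists>a\<in>Zmod n. \<forall>p\<in>prime_factors n. [a = f p] (mod int p)"
proof -
  have "\<forall>p\<in>prime_factors n. \<forall>q\<in>prime_factors n. p \<noteq> q \<longrightarrow> coprime p q"
    by (auto intro: primes_coprime)
  then obtain x where x: "\<forall>p\<in>prime_factors n. [x = nat (f p mod int p)] (mod p)"
    using chinese_remainder_nat[of "prime_factors n" "\<lambda>p. p" "\<lambda>p. nat (f p mod int p)"] by auto
  have "[int x mod int n = f p] (mod int p)" if "p \<in> prime_factors n" for p
  proof -
    have "0 < p" "int p dvd int n"
      using that by (auto simp: in_prime_factors_iff prime_gt_0_nat)
    have "[int x mod int n = int x] (mod int n)"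
      by (simp add: cong_def)
    then have "[int x mod int n = int x] (mod int p)"
      using \<open>int p dvd int n\<close> by (rule cong_dvd_modulus)
    moreover have "[int x = f p mod int p] (mod int p)"
      using x that \<open>0 < p\<close> cong_int_iff[of x "nat (f p mod int p)" p] by simp
    ultimately show ?thesis
      by (simp add: cong_def)
  qed
  moreover have "int x mod int n \<in> Zmod n"
    using assms by (simp add: Zmod_def)
  ultimately show ?thesis
    by blast
qed

lemma jacobi_sym_squarefree:
  assumes "squarefree n"
  shows "jacobi_sym n a = (\<Prod>p\<in>prime_factors n. Legendre a (int p))"
  unfolding jacobi_sym_def by (rule prod.cong) (simp_all add: multiplicity_squarefree[OF assms])

lemma jacobi_sym_cong:
  assumes "[a = b] (mod int n)"
  shows "jacobi_sym n a = jacobi_sym n b"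
  unfolding jacobi_sym_def
proof (rule prod.cong)
  fix p
  assume "p \<in> prime_factors n"
  then have "int p dvd int n"
    by (simp add: in_prime_factors_iff)
  then have "[a = b] (mod int p)"
    by (rule cong_dvd_modulus[OF assms])
  then show "Legendre a (int p) ^ multiplicity p n = Legendre b (int p) ^ multiplicity p n"
    by (simp add: Legendre_cong)
qed simp

lemma jacobi_sym_mult:
  assumes "\<forall>p\<in>prime_factors n. 2 < p"
  shows "jacobi_sym n (a * b) = jacobi_sym n a * jacobi_sym n b"
  unfolding jacobi_sym_def prod.distrib[symmetric] power_mult_distrib[symmetric]
  using assms by (intro prod.cong) (auto simp: Legendre_mult in_prime_factors_iff)

lemma jacobi_sym_1: "jacobi_sym n 1 = 1"
  unfolding jacobi_sym_def by (intro prod.neutral) (auto simp: Legendre_1 in_prime_factors_iff)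

lemma mod_in_Sgrp:
  assumes "n \<noteq> 0" "coprime a (int n)" "jacobi_sym n a = 1"
  shows "a mod int n \<in> Sgrp n"
proof -
  have "jacobi_sym n (a mod int n) = 1"
    using assms(3) jacobi_sym_cong[of "a mod int n" a n] by (simp add: cong_def)
  then show ?thesis
    using assms(1,2) unfolding Sgrp_def Umod_def Zmod_def by simp
qed

lemma mult_mod_in_Sgrp:
  assumes "n \<noteq> 0" "\<forall>p\<in>prime_factors n. 2 < p" "a \<in> Sgrp n" "b \<in> Sgrp n"
  shows "(a * b) mod int n \<in> Sgrp n"
proof (rule mod_in_Sgrp[OF assms(1)])
  show "coprime (a * b) (int n)"
    using assms(3,4) unfolding Sgrp_def Umod_def by simp
  show "jacobi_sym n (a * b) = 1"
    using assms(3,4) jacobi_sym_mult[OF assms(2)] unfolding Sgrp_def by simp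
qed

lemma exists_inverse_in_Sgrp:
  assumes "n \<noteq> 0" "\<forall>p\<in>prime_factors n. 2 < p" "a \<in> Sgrp n"
  shows "\<exists>a'\<in>Sgrp n. [a * a' = 1] (mod int n)"
proof -
  obtain a' where a': "[a * a' = 1] (mod int n)"
    using assms(3) cong_solve_coprime_int unfolding Sgrp_def Umod_def by blast
  have "coprime (a * a') (int n)"
    using cong_imp_coprime[OF cong_sym[OF a']] by simp
  moreover have "jacobi_sym n a * jacobi_sym n a' = 1"
    using jacobi_sym_cong[OF a'] jacobi_sym_mult[OF assms(2)] jacobi_sym_1 by simp
  ultimately have "a' mod int n \<in> Sgrp n"
    using assms(3) mod_in_Sgrp[OF assms(1), of a'] unfolding Sgrp_def by simp
  moreover have "[a * (a' mod int n) = 1] (mod int n)"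
    using a' by (simp add: cong_def mod_mult_right_eq)
  ultimately show ?thesis
    by blast
qed

lemma not_cong_0_if_coprime:
  fixes n :: nat
  assumes "n \<noteq> 1" "coprime a (int n)"
  shows "\<not> [a = 0] (mod int n)"
proof
  assume "[a = 0] (mod int n)"
  then have "is_unit (int n)"
    using assms(2) coprime_absorb_right[of "int n" a] by (simp add: cong_0_iff)
  with assms(1) show False
    by simp
qed


section \<open>From local to global zero-sums\<close>

lemma in_Sgrp_if_local_symbols:
  assumes "squarefree n" "a \<in> Zmod n"
    and "\<forall>p\<in>prime_factors n. [a = w p] (mod int p) \<and> \<not> int p dvd w p"
    and "(\<Prod>p\<in>prime_factors n. Legendre (w p) (int p)) = 1"
  shows "a \<in> Sgrp n"
proof -
  have "n \<noteq> 0"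
    using assms(1) by (cases "n = 0") auto
  have "\<forall>p\<in>prime_factors n. \<not> int p dvd a"
    using assms(3) cong_dvd_iff by blast
  then have "coprime a (int n)"
    using coprime_int_iff_prime_factors[OF \<open>n \<noteq> 0\<close>] by blast
  moreover have "jacobi_sym n a = (\<Prod>p\<in>prime_factors n. Legendre (w p) (int p))"
    unfolding jacobi_sym_squarefree[OF assms(1)] using assms(3)
    by (intro prod.cong) (auto intro: Legendre_cong)
  ultimately show ?thesis
    using assms(2,4) unfolding Sgrp_def Umod_def by simp
qed

lemma has_wzs_Sgrp_if_symbols_one:
  assumes "squarefree n" "I \<subseteq> {..<length xs}" "I \<noteq> {}"
    and local: "\<forall>p\<in>prime_factors n. local_zero_sum p I (w p) xs"
    and symbols: "\<forall>i\<in>I. (\<Prod>p\<in>prime_factors n. Legendre (w p i) (int p)) = 1"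
  shows "has_wzs n (Sgrp n) xs"
proof -
  let ?P = "prime_factors n"
  have "n \<noteq> 0"
    using assms(1) by (cases "n = 0") auto
  then have "\<forall>i. \<exists>a\<in>Zmod n. \<forall>p\<in>?P. [a = w p i] (mod int p)"
    by (intro allI chinese_remainder_prime_factors)
  then obtain a where a: "\<forall>i. a i \<in> Zmod n \<and> (\<forall>p\<in>?P. [a i = w p i] (mod int p))"
    using choice[of "\<lambda>i a. a \<in> Zmod n \<and> (\<forall>p\<in>?P. [a = w p i] (mod int p))"] by blast
  have weights: "\<forall>i\<in>I. a i \<in> Sgrp n"
  proof
    fix i
    assume "i \<in> I"
    show "a i \<in> Sgrp n"
      by (rule in_Sgrp_if_local_symbols[OF assms(1), where w = "\<lambda>p. w p i"])
        (use a local symbols \<open>i \<in> I\<close> in \<open>auto simp: local_zero_sum_def\<close>)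
  qed
  have "\<forall>p\<in>?P. int p dvd (\<Sum>i\<in>I. a i * xs ! i)"
  proof
    fix p
    assume p: "p \<in> ?P"
    then have "[(\<Sum>i\<in>I. a i * xs ! i) = (\<Sum>i\<in>I. w p i * xs ! i)] (mod int p)"
      using a by (intro cong_sum cong_mult cong_refl) blast
    moreover have "[(\<Sum>i\<in>I. w p i * xs ! i) = 0] (mod int p)"
      using local p unfolding local_zero_sum_def by blast
    ultimately show "int p dvd (\<Sum>i\<in>I. a i * xs ! i)"
      using cong_trans[of _ _ "int p" 0] by (simp add: cong_0_iff)
  qed
  then have "[(\<Sum>i\<in>I. a i * xs ! i) = 0] (mod int n)"
    unfolding cong_0_iff by (rule int_dvd_if_prime_factors_dvd[OF assms(1)])
  then show ?thesis
    unfolding has_wzs_def using assms(2,3) weights by blast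
qed

text \<open>A term divisible by the prime \<open>r\<close> contributes nothing to the local sum at \<open>r\<close>, so its
  weight there may be multiplied by a nonresidue; this repairs the symbol of every non-unit.\<close>

lemma has_wzs_Sgrp_if_unit_symbols_one:
  assumes "squarefree n" "\<forall>p\<in>prime_factors n. 2 < p" "I \<subseteq> {..<length xs}" "I \<noteq> {}"
    and local: "\<forall>p\<in>prime_factors n. local_zero_sum p I (w p) xs"
    and units: "\<forall>i\<in>I. coprime (xs ! i) (int n) \<longrightarrow> (\<Prod>p\<in>prime_factors n. Legendre (w p i) (int p)) = 1"
  shows "has_wzs n (Sgrp n) xs"
proof -
  let ?P = "prime_factors n"
  have n: "n \<noteq> 0"
    using assms(1) by (cases "n = 0") auto
  have odd_prime: "\<forall>p\<in>?P. prime p \<and> 2 < p"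
    using assms(2) by (auto simp: in_prime_factors_iff)
  then have "\<forall>p\<in>?P. \<exists>g. Legendre g (int p) = -1"
    using exists_nonresidue by blast
  then obtain g where g: "\<forall>p\<in>?P. Legendre (g p) (int p) = -1"
    using bchoice[of ?P "\<lambda>p g. Legendre g (int p) = -1"] by blast
  define E where "E i = (\<Prod>p\<in>?P. Legendre (w p i) (int p))" for i
  have "\<forall>i\<in>I. \<exists>r. E i \<noteq> 1 \<longrightarrow> r \<in> ?P \<and> int r dvd xs ! i"
    using units coprime_int_iff_prime_factors[OF n] unfolding E_def by blast
  then obtain r where r: "\<forall>i\<in>I. E i \<noteq> 1 \<longrightarrow> r i \<in> ?P \<and> int (r i) dvd xs ! i"
    using bchoice[of I "\<lambda>i r. E i \<noteq> 1 \<longrightarrow> r \<in> ?P \<and> int r dvd xs ! i"] by blast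
  define w' where "w' p i = (if E i \<noteq> 1 \<and> p = r i then g p * w p i else w p i)" for p i
  have "\<forall>p\<in>?P. local_zero_sum p I (w' p) xs"
  proof
    fix p
    assume p: "p \<in> ?P"
    then have "\<not> int p dvd g p" "prime (int p)"
      using g odd_prime Legendre_eq_0_iff[of "g p" "int p"] by auto
    then have "\<forall>i\<in>I. w' p i \<noteq> w p i \<longrightarrow> int p dvd xs ! i \<and> \<not> int p dvd w' p i"
      using r local p unfolding w'_def local_zero_sum_def by (auto simp: prime_dvd_mult_iff)
    then show "local_zero_sum p I (w' p) xs"
      using local p local_zero_sum_change_at_multiples by blast
  qed
  moreover have "(\<Prod>p\<in>?P. Legendre (w' p i) (int p)) = 1" if i: "i \<in> I" for i
  proof (cases "E i = 1")
    case False
    then have "E i = -1"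
      using prod_Legendre_unit[of ?P "\<lambda>p. w p i"] local i unfolding E_def local_zero_sum_def by auto
    have "(\<Prod>p\<in>?P. Legendre (w' p i) (int p)) =
        (\<Prod>p\<in>?P. Legendre (if p = r i then g p * w p i else w p i) (int p))"
      using False by (simp add: w'_def)
    also have "\<dots> = Legendre (g (r i)) (int (r i)) * E i"
      unfolding E_def using False r i odd_prime by (intro prod_Legendre_mult_at) auto
    finally show ?thesis
      using \<open>E i = -1\<close> g r i False by simp
  qed (simp add: w'_def E_def)
  ultimately show ?thesis
    using has_wzs_Sgrp_if_symbols_one[OF assms(1,3,4)] by blast
qed


section \<open>The Davenport constant of \<open>S(n)\<close>\<close>

lemma has_wzs_Sgrp_three_units:
  assumes "squarefree n" "\<forall>p\<in>prime_factors n. 7 \<le> p"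
    and "distinct [i1, i2, i3]" "\<forall>i\<in>{i1, i2, i3}. i < length xs \<and> coprime (xs ! i) (int n)"
  shows "has_wzs n (Sgrp n) xs"
proof -
  let ?P = "prime_factors n" and ?I = "{i1, i2, i3}"
  have n: "n \<noteq> 0"
    using assms(1) by (cases "n = 0") auto
  have "\<forall>p\<in>?P. \<exists>w. local_zero_sum p ?I w xs \<and> (\<forall>i\<in>?I. Legendre (w i) (int p) = 1)"
  proof
    fix p
    assume p: "p \<in> ?P"
    then have pp: "prime p" "7 \<le> p"
      using assms(2) by (auto simp: in_prime_factors_iff)
    have "\<not> int p dvd xs ! i1" "\<not> int p dvd xs ! i2" "\<not> int p dvd xs ! i3"
      using assms(4) p coprime_int_iff_prime_factors[OF n] by auto
    then obtain a b where ab: "Legendre a p = 1" "Legendre b p = 1"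
      "[a * xs ! i1 + b * xs ! i2 + xs ! i3 = 0] (mod int p)"
      using three_term_zero_sum_residues[OF pp] by blast
    define w where "w i = (if i = i1 then a else if i = i2 then b else 1)" for i
    have symbols: "\<forall>i\<in>?I. Legendre (w i) (int p) = 1"
      using ab Legendre_1[OF pp(1)] unfolding w_def by auto
    then have "\<forall>i\<in>?I. \<not> int p dvd w i"
      by (simp add: Legendre_eq_0_iff[symmetric])
    moreover have "(\<Sum>i\<in>?I. w i * xs ! i) = a * xs ! i1 + b * xs ! i2 + xs ! i3"
      using assms(3) unfolding w_def by simp
    ultimately show "\<exists>w. local_zero_sum p ?I w xs \<and> (\<forall>i\<in>?I. Legendre (w i) (int p) = 1)"
      using ab(3) symbols unfolding local_zero_sum_def by metis
  qed
  then obtain W where W: "\<forall>p\<in>?P. local_zero_sum p ?I (W p) xs \<and> (\<forall>i\<in>?I. Legendre (W p i) (int p) = 1)"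
    using bchoice[of ?P "\<lambda>p w. local_zero_sum p ?I w xs \<and> (\<forall>i\<in>?I. Legendre (w i) (int p) = 1)"]
    by blast
  show ?thesis
  proof (rule has_wzs_Sgrp_if_symbols_one[OF assms(1)])
    show "?I \<subseteq> {..<length xs}" "?I \<noteq> {}"
      using assms(4) by auto
    show "\<forall>p\<in>?P. local_zero_sum p ?I (W p) xs"
      using W by blast
    show "\<forall>i\<in>?I. (\<Prod>p\<in>?P. Legendre (W p i) (int p)) = 1"
      using W by (intro ballI prod.neutral) blast
  qed
qed

text \<open>The symbol of the weight at \<open>i2\<close> is prescribed at \<open>q\<close> only after the other primes have
  been treated, so as to cancel the product of the others.\<close>

lemma has_wzs_Sgrp_two_units:
  assumes "squarefree n" "\<forall>p\<in>prime_factors n. 3 < p"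
    and "distinct [i1, i2, l]" "\<forall>i\<in>{i1, i2, l}. i < length xs"
    and "coprime (xs ! i1) (int n)" "coprime (xs ! i2) (int n)" "\<not> coprime (xs ! l) (int n)"
    and "q \<in> prime_factors n" "\<not> int q dvd xs ! l"
  shows "has_wzs n (Sgrp n) xs"
proof -
  let ?P = "prime_factors n" and ?I = "{i1, i2, l}"
  have n: "n \<noteq> 0"
    using assms(1) by (cases "n = 0") auto
  have local: "\<exists>w. local_zero_sum p ?I w xs \<and> Legendre (w i1) (int p) = 1 \<and>
      (\<not> int p dvd xs ! l \<longrightarrow> Legendre (w i2) (int p) = e)" if "p \<in> ?P" "e \<in> {1, -1}" for p e
    using local_zero_sum_two_units[of p i1 i2 l xs e] assms(2,3,5,6) that
      coprime_int_iff_prime_factors[OF n] by (auto simp: in_prime_factors_iff)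
  obtain W0 where W0: "\<forall>p\<in>?P. local_zero_sum p ?I (W0 p) xs \<and> Legendre (W0 p i1) (int p) = 1 \<and>
      (\<not> int p dvd xs ! l \<longrightarrow> Legendre (W0 p i2) (int p) = 1)"
    using bchoice[of ?P "\<lambda>p w. local_zero_sum p ?I w xs \<and> Legendre (w i1) (int p) = 1 \<and>
      (\<not> int p dvd xs ! l \<longrightarrow> Legendre (w i2) (int p) = 1)"] local by blast
  define E where "E = (\<Prod>p\<in>?P - {q}. Legendre (W0 p i2) (int p))"
  have E: "E \<in> {1, -1}"
    unfolding E_def using W0 by (intro prod_Legendre_unit) (auto simp: local_zero_sum_def)
  then obtain Wq where Wq: "local_zero_sum q ?I Wq xs" "Legendre (Wq i1) (int q) = 1"
    "Legendre (Wq i2) (int q) = E"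
    using local[OF assms(8) E] assms(9) by blast
  define W where "W p = (if p = q then Wq else W0 p)" for p
  show ?thesis
  proof (rule has_wzs_Sgrp_if_unit_symbols_one[OF assms(1)])
    show "\<forall>p\<in>?P. 2 < p" "?I \<subseteq> {..<length xs}" "?I \<noteq> {}"
      using assms(2,4) by auto
    show "\<forall>p\<in>?P. local_zero_sum p ?I (W p) xs"
      using W0 Wq(1) unfolding W_def by simp
    have "(\<Prod>p\<in>?P. Legendre (W p i1) (int p)) = 1"
      using W0 Wq(2) unfolding W_def by (intro prod.neutral) simp
    moreover have "(\<Prod>p\<in>?P. Legendre (W p i2) (int p)) = E * E"
      using prod.remove[OF finite_set_mset assms(8), of "\<lambda>p. Legendre (W p i2) (int p)"] Wq(3)
      unfolding E_def W_def by simp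
    ultimately show "\<forall>i\<in>?I. coprime (xs ! i) (int n) \<longrightarrow>
        (\<Prod>p\<in>?P. Legendre (W p i) (int p)) = 1"
      using assms(7) E by auto
  qed
qed

lemma has_wzs_Sgrp_multiple_of_n:
  assumes "squarefree n" "n \<noteq> 1" "l < length xs" "\<forall>p\<in>prime_factors n. int p dvd xs ! l"
  shows "has_wzs n (Sgrp n) xs"
proof -
  have "n \<noteq> 0"
    using assms(1) by (intro notI) simp
  then have "1 \<in> Sgrp n"
    using assms(2) jacobi_sym_1 unfolding Sgrp_def Umod_def Zmod_def by simp
  moreover have "[1 * xs ! l = 0] (mod int n)"
    using int_dvd_if_prime_factors_dvd[OF assms(1,4)] by (simp add: cong_0_iff)
  ultimately show ?thesis
    unfolding has_wzs_def using assms(3) by (intro exI[of _ "{l}"] exI[of _ "\<lambda>_. 1"]) auto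
qed

lemma has_wzs_Sgrp_exactly_two_units:
  assumes "squarefree n" "\<forall>p\<in>prime_factors n. 3 < p" "n \<noteq> 1" "3 \<le> length xs"
    and "i1 \<noteq> i2" "\<forall>i\<in>{i1, i2}. i < length xs \<and> coprime (xs ! i) (int n)"
    and "\<forall>i<length xs. i \<notin> {i1, i2} \<longrightarrow> \<not> coprime (xs ! i) (int n)"
  shows "has_wzs n (Sgrp n) xs"
proof -
  have "\<exists>l\<in>{0, 1, 2}. l \<noteq> i1 \<and> l \<noteq> i2"
    by auto
  then obtain l where l: "l \<in> {0, 1, 2}" "l \<noteq> i1" "l \<noteq> i2"
    by blast
  moreover from this have "l < length xs"
    using assms(4) by auto
  ultimately have "\<not> coprime (xs ! l) (int n)"
    using assms(7) by blast
  show ?thesis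
  proof (cases "\<forall>p\<in>prime_factors n. int p dvd xs ! l")
    case True
    then show ?thesis
      using has_wzs_Sgrp_multiple_of_n[OF assms(1,3) \<open>l < length xs\<close>] by blast
  next
    case False
    then obtain q where "q \<in> prime_factors n" "\<not> int q dvd xs ! l"
      by blast
    then show ?thesis
      using has_wzs_Sgrp_two_units[OF assms(1,2), of i1 i2 l] assms(5,6) l
        \<open>l < length xs\<close> \<open>\<not> coprime (xs ! l) (int n)\<close> by auto
  qed
qed

lemma has_wzs_Sgrp_at_most_one_unit:
  assumes "squarefree n" "\<forall>p\<in>prime_factors n. 3 < p" "card (prime_factors n) < length xs"
    and "\<forall>i<length xs. \<forall>j<length xs. coprime (xs ! i) (int n) \<longrightarrow> coprime (xs ! j) (int n) \<longrightarrow> i = j"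
  shows "has_wzs n (Sgrp n) xs"
proof -
  let ?P = "prime_factors n"
  obtain I where I: "I \<subseteq> {..<length xs}" "I \<noteq> {}"
    and sections: "\<forall>p\<in>?P. card {i\<in>I. \<not> int p dvd xs ! i} \<noteq> 1"
    using exists_subset_card_sections_neq_1[of ?P "{..<length xs}" "\<lambda>i p. \<not> int p dvd xs ! i"] assms(3)
    by auto
  have "finite I"
    using I(1) finite_subset by blast
  have "\<forall>p\<in>?P. \<exists>w. local_zero_sum p I w xs \<and>
      (\<forall>i\<in>I. coprime (xs ! i) (int n) \<longrightarrow> Legendre (w i) (int p) = 1)"
    using local_zero_sum_residues_on_subsingleton[OF _ _ \<open>finite I\<close>] assms(2,4) sections I(1)
    by (auto simp: in_prime_factors_iff subset_iff)
  then obtain W where W: "\<forall>p\<in>?P. local_zero_sum p I (W p) xs \<and>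
      (\<forall>i\<in>I. coprime (xs ! i) (int n) \<longrightarrow> Legendre (W p i) (int p) = 1)"
    using bchoice[of ?P "\<lambda>p w. local_zero_sum p I w xs \<and>
      (\<forall>i\<in>I. coprime (xs ! i) (int n) \<longrightarrow> Legendre (w i) (int p) = 1)"] by blast
  show ?thesis
  proof (rule has_wzs_Sgrp_if_unit_symbols_one[OF assms(1) _ I])
    show "\<forall>p\<in>?P. 2 < p"
      using assms(2) by auto
    show "\<forall>p\<in>?P. local_zero_sum p I (W p) xs"
      using W by blast
    show "\<forall>i\<in>I. coprime (xs ! i) (int n) \<longrightarrow> (\<Prod>p\<in>?P. Legendre (W p i) (int p)) = 1"
      using W by (auto intro!: prod.neutral)
  qed
qed

lemma has_wzs_Sgrp_if_long:
  assumes "squarefree n" "\<forall>p\<in>prime_factors n. 7 \<le> p" "2 \<le> card (prime_factors n)"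
    and "card (prime_factors n) < length xs"
  shows "has_wzs n (Sgrp n) xs"
proof -
  let ?unit = "\<lambda>i. i < length xs \<and> coprime (xs ! i) (int n)"
  have "n \<noteq> 1"
    using assms(3) by (intro notI) simp
  have primes: "\<forall>p\<in>prime_factors n. 3 < p"
    using assms(2) by auto
  consider (three) i1 i2 i3 where "distinct [i1, i2, i3]" "?unit i1" "?unit i2" "?unit i3"
    | (two) i1 i2 where "i1 \<noteq> i2" "?unit i1" "?unit i2" "\<forall>i. ?unit i \<longrightarrow> i \<in> {i1, i2}"
    | (one) "\<forall>i j. ?unit i \<longrightarrow> ?unit j \<longrightarrow> i = j"
    by (metis distinct_length_2_or_more distinct_singleton insertCI)
  then show ?thesis
  proof cases
    case three
    then show ?thesis
      using has_wzs_Sgrp_three_units[OF assms(1,2)] by auto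
  next
    case two
    show ?thesis
      by (rule has_wzs_Sgrp_exactly_two_units[OF assms(1) primes \<open>n \<noteq> 1\<close>, of xs i1 i2])
        (use two assms(3,4) in auto)
  next
    case one
    then show ?thesis
      using has_wzs_Sgrp_at_most_one_unit[OF assms(1) primes assms(4)] by blast
  qed
qed

lemma has_wzs_take:
  assumes "has_wzs m A (take k xs)"
  shows "has_wzs m A xs"
proof -
  obtain I a where I: "I \<subseteq> {..<length (take k xs)}" "I \<noteq> {}" "\<forall>i\<in>I. a i \<in> A"
    and sum: "[(\<Sum>i\<in>I. a i * take k xs ! i) = 0] (mod int m)"
    using assms unfolding has_wzs_def by blast
  have "(\<Sum>i\<in>I. a i * take k xs ! i) = (\<Sum>i\<in>I. a i * xs ! i)"
    using I(1) by (intro sum.cong) auto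
  then show ?thesis
    unfolding has_wzs_def using I sum by (intro exI[of _ I] exI[of _ a]) auto
qed

lemma davenport_eqI:
  assumes "set xs \<subseteq> Zmod m" "\<not> has_wzs m A xs"
    and "\<forall>ys. length ys = Suc (length xs) \<and> set ys \<subseteq> Zmod m \<longrightarrow> has_wzs m A ys"
  shows "davenport m A = Suc (length xs)"
  unfolding davenport_def
proof (rule Least_equality)
  fix k
  assume k: "\<forall>ys. length ys = k \<and> set ys \<subseteq> Zmod m \<longrightarrow> has_wzs m A ys"
  show "Suc (length xs) \<le> k"
  proof (rule ccontr)
    assume "\<not> Suc (length xs) \<le> k"
    then have "has_wzs m A (take k xs)"
      using k assms(1) set_take_subset[of k xs] by auto
    then show False
      using assms(2) has_wzs_take by blast
  qed
qed (use assms(3) in blast)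

lemma extremal_Sgrp_if_no_wzs:
  assumes "squarefree n" "\<forall>p\<in>prime_factors n. 7 \<le> p" "2 \<le> card (prime_factors n)"
    and "set xs \<subseteq> Zmod n" "length xs = card (prime_factors n)" "\<not> has_wzs n (Sgrp n) xs"
  shows "extremal n (Sgrp n) xs"
proof -
  have "davenport n (Sgrp n) = Suc (length xs)"
    using davenport_eqI[OF assms(4,6)] has_wzs_Sgrp_if_long[OF assms(1-3)] assms(5) by simp
  then show ?thesis
    unfolding extremal_def using assms(4,6) by simp
qed


section \<open>Extremal sequences\<close>

lemma cong_sum_rescaled:
  assumes "\<forall>i\<in>I. [y i = c * a i * x i] (mod m)" "\<forall>i\<in>I. [a i * a' i = 1] (mod m)"
  shows "[(\<Sum>i\<in>I. b i * a' i * y i) = c * (\<Sum>i\<in>I. b i * x i)] (mod m)"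
proof -
  have "[(\<Sum>i\<in>I. b i * a' i * y i) = (\<Sum>i\<in>I. c * (b i * x i) * (a i * a' i))] (mod m)"
  proof (rule cong_sum)
    fix i
    assume "i \<in> I"
    then have "[b i * a' i * y i = b i * a' i * (c * a i * x i)] (mod m)"
      using assms(1) by (intro cong_mult cong_refl) auto
    then show "[b i * a' i * y i = c * (b i * x i) * (a i * a' i)] (mod m)"
      by (simp add: ac_simps)
  qed
  also have "[(\<Sum>i\<in>I. c * (b i * x i) * (a i * a' i)) = (\<Sum>i\<in>I. c * (b i * x i) * 1)] (mod m)"
    using assms(2) by (intro cong_sum cong_mult cong_refl) auto
  finally show ?thesis
    by (simp add: sum_distrib_left)
qed

lemma has_wzs_Sgrp_if_equiv_seq:
  assumes "n \<noteq> 0" "\<forall>p\<in>prime_factors n. 2 < p"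
    and "equiv_seq n (Sgrp n) xs ys" "has_wzs n (Sgrp n) xs"
  shows "has_wzs n (Sgrp n) ys"
proof -
  obtain I b where I: "I \<subseteq> {..<length xs}" "I \<noteq> {}" "\<forall>i\<in>I. b i \<in> Sgrp n"
    and zero: "[(\<Sum>i\<in>I. b i * xs ! i) = 0] (mod int n)"
    using assms(4) unfolding has_wzs_def by blast
  obtain a c \<sigma> where len: "length xs = length ys" and perm: "\<sigma> permutes {..<length xs}"
    and a: "\<forall>i<length xs. a i \<in> Sgrp n"
    and ys: "\<forall>i<length xs. [ys ! \<sigma> i = c * a i * xs ! i] (mod int n)"
    using assms(3) unfolding equiv_seq_def by blast
  have "\<forall>i\<in>{..<length xs}. \<exists>a'\<in>Sgrp n. [a i * a' = 1] (mod int n)"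
    using a exists_inverse_in_Sgrp[OF assms(1,2)] by blast
  then obtain a' where a': "\<forall>i\<in>{..<length xs}. a' i \<in> Sgrp n \<and> [a i * a' i = 1] (mod int n)"
    using bchoice[of "{..<length xs}" "\<lambda>i a'. a' \<in> Sgrp n \<and> [a i * a' = 1] (mod int n)"] by blast
  define b' where "b' j = (b (inv_into UNIV \<sigma> j) * a' (inv_into UNIV \<sigma> j)) mod int n" for j
  have b'_perm: "b' (\<sigma> i) = (b i * a' i) mod int n" for i
    unfolding b'_def using permutes_inverses(2)[OF perm] by simp
  have "\<sigma> ` I \<subseteq> {..<length ys}"
    using I(1) permutes_image[OF perm] len by auto
  moreover have "\<forall>j\<in>\<sigma> ` I. b' j \<in> Sgrp n"
    using I(1,3) a' b'_perm mult_mod_in_Sgrp[OF assms(1,2)] by auto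
  moreover have "[(\<Sum>j\<in>\<sigma> ` I. b' j * ys ! j) = 0] (mod int n)"
  proof -
    have "(\<Sum>j\<in>\<sigma> ` I. b' j * ys ! j) = (\<Sum>i\<in>I. (b i * a' i) mod int n * ys ! \<sigma> i)"
      using sum.reindex[OF permutes_inj_on[OF perm], of "\<lambda>j. b' j * ys ! j"] by (simp add: b'_perm)
    also have "[\<dots> = (\<Sum>i\<in>I. b i * a' i * ys ! \<sigma> i)] (mod int n)"
      by (intro cong_sum cong_mult cong_refl) (simp add: cong_def)
    also have "[(\<Sum>i\<in>I. b i * a' i * ys ! \<sigma> i) = c * (\<Sum>i\<in>I. b i * xs ! i)] (mod int n)"
      using I(1) ys a' by (intro cong_sum_rescaled) auto
    also have "[c * (\<Sum>i\<in>I. b i * xs ! i) = c * 0] (mod int n)"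
      by (intro cong_mult cong_refl zero)
    finally show ?thesis
      by simp
  qed
  ultimately show ?thesis
    unfolding has_wzs_def using I(2) by (intro exI[of _ "\<sigma> ` I"] exI[of _ b']) auto
qed

lemma has_wzs_tl_mod_divisor:
  fixes m n :: nat
  assumes "A \<subseteq> Umod n" "m dvd n" "m \<noteq> 0"
    and "I \<subseteq> {1..<length ys}" "I \<noteq> {}" "\<forall>i\<in>I. a i \<in> A"
    and zero: "[(\<Sum>i\<in>I. a i * ys ! i) = 0] (mod int n)"
  shows "has_wzs m (Umod m) (map (\<lambda>y. y mod int m) (tl ys))"
proof -
  define J where "J = {j. Suc j \<in> I}"
  have I_eq: "I = Suc ` J"
    using assms(4) unfolding J_def by (auto simp: image_iff subset_iff Suc_le_eq gr0_conv_Suc)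
  let ?T = "map (\<lambda>y. y mod int m) (tl ys)"
  define b where "b j = a (Suc j) mod int m" for j
  have "J \<subseteq> {..<length ?T}" "J \<noteq> {}"
    using assms(4,5) unfolding I_eq by auto
  moreover have "\<forall>j\<in>J. b j \<in> Umod m"
  proof
    fix j
    assume "j \<in> J"
    then have "coprime (a (Suc j)) (int n)"
      using assms(1,6) I_eq unfolding Umod_def by auto
    then have "coprime (a (Suc j)) (int m)"
      using assms(2) coprime_divisors[of 1 "a (Suc j)" "int m" "int n"] by auto
    then show "b j \<in> Umod m"
      unfolding b_def Umod_def Zmod_def using assms(3) by simp
  qed
  moreover have "[(\<Sum>j\<in>J. b j * ?T ! j) = 0] (mod int m)"
  proof -
    have "[(\<Sum>j\<in>J. b j * ?T ! j) = (\<Sum>j\<in>J. a (Suc j) * ys ! Suc j)] (mod int m)"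
    proof (rule cong_sum)
      fix j
      assume "j \<in> J"
      then have "?T ! j = ys ! Suc j mod int m"
        using \<open>J \<subseteq> {..<length ?T}\<close> by (auto simp: nth_tl)
      then show "[b j * ?T ! j = a (Suc j) * ys ! Suc j] (mod int m)"
        unfolding b_def by (simp add: cong_def mod_mult_eq)
    qed
    also have "(\<Sum>j\<in>J. a (Suc j) * ys ! Suc j) = (\<Sum>i\<in>I. a i * ys ! i)"
      unfolding I_eq by (simp add: sum.reindex)
    also have "[(\<Sum>i\<in>I. a i * ys ! i) = 0] (mod int m)"
      by (rule cong_dvd_modulus[OF zero]) (simp add: assms(2))
    finally show ?thesis .
  qed
  ultimately show ?thesis
    unfolding has_wzs_def by (intro exI[of _ J] exI[of _ b]) auto
qed

text \<open>The first term cannot occur in a zero-sum, being the only one prime to \<open>p\<close>; the others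
  reduce to a zero-sum modulo \<open>n / p\<close>.\<close>

lemma no_wzs_if_reduction_has_none:
  fixes n p :: nat
  assumes "A \<subseteq> Umod n" "p \<in> prime_factors n"
    and "\<not> int p dvd ys ! 0" "\<forall>i\<in>{1..<length ys}. int p dvd ys ! i"
    and "\<not> has_wzs (n div p) (Umod (n div p)) (map (\<lambda>y. y mod int (n div p)) (tl ys))"
  shows "\<not> has_wzs n A ys"
proof
  assume "has_wzs n A ys"
  then obtain I a where I: "I \<subseteq> {..<length ys}" "I \<noteq> {}" "\<forall>i\<in>I. a i \<in> A"
    and zero: "[(\<Sum>i\<in>I. a i * ys ! i) = 0] (mod int n)"
    unfolding has_wzs_def by blast
  have "n \<noteq> 0" "p dvd n" "prime (int p)"
    using assms(2) by (auto simp: in_prime_factors_iff)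
  have "0 \<notin> I"
  proof
    assume "0 \<in> I"
    have "int p dvd (\<Sum>i\<in>I. a i * ys ! i)"
      using zero \<open>p dvd n\<close> by (simp add: cong_0_iff dvd_trans[of "int p" "int n"])
    moreover have "int p dvd (\<Sum>i\<in>I - {0}. a i * ys ! i)"
      using I(1) assms(4) by (intro dvd_sum) (auto intro: dvd_mult)
    moreover have "(\<Sum>i\<in>I. a i * ys ! i) = a 0 * ys ! 0 + (\<Sum>i\<in>I - {0}. a i * ys ! i)"
      using sum.remove[OF finite_subset[OF I(1)] \<open>0 \<in> I\<close>] by simp
    ultimately have "int p dvd a 0 * ys ! 0"
      by (simp add: dvd_add_left_iff)
    moreover have "coprime (a 0) (int n)"
      using I(3) \<open>0 \<in> I\<close> assms(1) unfolding Umod_def by auto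
    then have "\<not> int p dvd a 0"
      using assms(2) coprime_int_iff_prime_factors[OF \<open>n \<noteq> 0\<close>] by blast
    ultimately show False
      using assms(3) \<open>prime (int p)\<close> by (simp add: prime_dvd_mult_iff)
  qed
  have "I \<subseteq> {1..<length ys}"
  proof
    fix i
    assume "i \<in> I"
    then show "i \<in> {1..<length ys}"
      using I(1) \<open>0 \<notin> I\<close> by (cases i) auto
  qed
  moreover have "n div p dvd n" "n div p \<noteq> 0"
    using \<open>n \<noteq> 0\<close> \<open>p dvd n\<close> by (auto simp: dvd_div_eq_0_iff)
  ultimately have "has_wzs (n div p) (Umod (n div p)) (map (\<lambda>y. y mod int (n div p)) (tl ys))"
    using has_wzs_tl_mod_divisor[OF assms(1)] I(2,3) zero by blast
  with assms(5) show False
    by contradiction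
qed

lemma no_wzs_Sgrp_pair:
  assumes "n \<noteq> 1" "\<forall>p\<in>prime_factors n. 2 < p"
    and "y1 \<in> Sgrp n" "(- y2) mod int n \<in> Umod n - Sgrp n"
  shows "\<not> has_wzs n (Sgrp n) [y1, y2]"
proof
  assume "has_wzs n (Sgrp n) [y1, y2]"
  then obtain I a where I: "I \<subseteq> {..<length [y1, y2]}" "I \<noteq> {}" "\<forall>i\<in>I. a i \<in> Sgrp n"
    and zero: "[(\<Sum>i\<in>I. a i * [y1, y2] ! i) = 0] (mod int n)"
    unfolding has_wzs_def by blast
  let ?z = "(- y2) mod int n"
  have "n \<noteq> 0"
    using assms(3) unfolding Sgrp_def Umod_def Zmod_def by auto
  have "coprime ?z (int n)"
    using assms(4) unfolding Umod_def by blast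
  then have "coprime y1 (int n)" "coprime y2 (int n)"
    using assms(3) \<open>n \<noteq> 0\<close> unfolding Sgrp_def Umod_def by auto
  have no_single: "\<not> [b * y = 0] (mod int n)" if "b \<in> Sgrp n" "coprime y (int n)" for b y
    using that assms(1) not_cong_0_if_coprime[of n "b * y"] unfolding Sgrp_def Umod_def by simp
  have "I \<subseteq> {0, 1}"
    using I(1) by auto
  then have "I = {0} \<or> I = {1} \<or> I = {0, 1}"
    using I(2) by auto
  then show False
  proof (elim disjE)
    assume "I = {0}"
    then show False
      using no_single[of "a 0" y1] I(3) zero \<open>coprime y1 (int n)\<close> by simp
  next
    assume "I = {1}"
    then show False
      using no_single[of "a 1" y2] I(3) zero \<open>coprime y2 (int n)\<close> by simp
  next
    assume I01: "I = {0, 1}"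
    then have "int n dvd a 0 * y1 - a 1 * (- y2)"
      using zero by (simp add: cong_0_iff)
    then have "[a 0 * y1 = a 1 * (- y2)] (mod int n)"
      by (simp add: cong_iff_dvd_diff)
    moreover have "[a 1 * (- y2) = a 1 * ?z] (mod int n)"
      by (simp add: cong_def mod_mult_right_eq)
    ultimately have "[a 0 * y1 = a 1 * ?z] (mod int n)"
      by (rule cong_trans)
    then have "jacobi_sym n (a 0 * y1) = jacobi_sym n (a 1 * ?z)"
      by (rule jacobi_sym_cong)
    then have "jacobi_sym n ?z = 1"
      using I(3) I01 assms(3) jacobi_sym_mult[OF assms(2)] unfolding Sgrp_def by simp
    then show False
      using assms(4) unfolding Sgrp_def by simp
  qed
qed

theorem theorem2p13:
  fixes n :: nat and xs :: "int list"
  assumes "odd n" and "squarefree n"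
    and "\<forall>p\<in>prime_factors n. p \<ge> 7"
    and "Omega n \<ge> 2"
    and "set xs \<subseteq> Zmod n" and "length xs = Omega n"
  shows "(\<forall>ys p. set ys \<subseteq> Zmod n \<and> equiv_seq n (Sgrp n) xs ys \<and>
            p \<in> prime_factors n \<and> \<not> int p dvd ys ! 0 \<and>
            (\<forall>i\<in>{1..<length ys}. int p dvd ys ! i) \<and>
            extremal (n div p) (Umod (n div p)) (map (\<lambda>y. y mod int (n div p)) (tl ys))
          \<longrightarrow> extremal n (Sgrp n) xs)
       \<and> (\<forall>y1 y2. Omega n = 2 \<and> set [y1, y2] \<subseteq> Zmod n \<and> equiv_seq n (Sgrp n) xs [y1, y2] \<and>
            y1 \<in> Sgrp n \<and> (- y2) mod int n \<in> Umod n - Sgrp n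
          \<longrightarrow> extremal n (Sgrp n) xs)"
proof -
  have card: "card (prime_factors n) = Omega n"
    using Omega_squarefree[OF assms(2)] by simp
  have "n \<noteq> 0"
    using assms(2) by (intro notI) simp
  have "n \<noteq> 1"
    using assms(4) card by (intro notI) simp
  have odd_primes: "\<forall>p\<in>prime_factors n. 2 < p"
    using assms(3) by auto
  have extremal: "extremal n (Sgrp n) xs"
    if "equiv_seq n (Sgrp n) xs ys" "\<not> has_wzs n (Sgrp n) ys" for ys
    using that has_wzs_Sgrp_if_equiv_seq[OF \<open>n \<noteq> 0\<close> odd_primes]
      extremal_Sgrp_if_no_wzs[OF assms(2,3) _ assms(5)] card assms(4,6) by auto
  have "Sgrp n \<subseteq> Umod n"
    unfolding Sgrp_def by blast
  show ?thesis
  proof (intro conjI allI impI, goal_cases)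
    case (1 ys p)
    then have "\<not> has_wzs n (Sgrp n) ys"
      using no_wzs_if_reduction_has_none[OF \<open>Sgrp n \<subseteq> Umod n\<close>, of p ys]
      unfolding extremal_def by blast
    with 1 show ?case
      using extremal by blast
  next
    case (2 y1 y2)
    then have "\<not> has_wzs n (Sgrp n) [y1, y2]"
      using no_wzs_Sgrp_pair[OF \<open>n \<noteq> 1\<close> odd_primes] by blast
    with 2 show ?case
      using extremal by blast
  qed
qed

end
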